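(* Let $a\in(0,0.01)$ be a constant and $k$ such that $ak$ is an even integer. Let $G$ be a graph and $K,K'$ vertex sets of size $k$ with $|K\cap K'|\ge(1-10a)k$ such that $F=G[K]\in\mathcal{F}_k$ with partitions $K=A\cup B$, $A=A_1\cup\dots\cup A_r$, and $F'=G[K']\in\mathcal{F}_k$ with partitions $K'=A'\cup B'$, $A'=A'_1\cup\dots\cup A'_r$ (as in the definition of $\mathcal{F}_k$). Then: 1. a vertex $v\in K\cap K'$ lies in $A$ if and only if it lies in $A'$; 2. for $u,v\in A\cap A'$, $\{u,v\}=A_j$ for some $j$ if and only if $\{u,v\}=A'_{j'}$ for some $j'$.
   Context: A graph $F$ on a $k$-set $K$ is in $\mathcal{F}_k$ with respect to partitions $K=A\cup B$, $A=A_1\cup\dots\cup A_r$, where $|A|=ak$, $|B|=(1-a)k$, $r=ak/2$, $|A_i|=2$, if: (1) $F$ is bipartite with parts $A$ and $B$; (2) for every $i$ and every $\beta\in B$, $\beta$ is adjacent either to both vertices of $A_i$ or to neither; (3) every vertex of $A$ has degree at least $0.15k$ in $F$; (4) for all $i\ne j$, the symmetric difference of the neighborhoods of $A_i$ and $A_j$ has size at least $0.25k$. *)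

theory Defs
  imports Complex_Main
begin

definition simple_graph :: "('v \<Rightarrow> 'v \<Rightarrow> bool) \<Rightarrow> bool" where
  "simple_graph E \<longleftrightarrow> (\<forall>x y. E x y \<longrightarrow> E y x) \<and> (\<forall>x. \<not> E x x)"

definition nbhd_in :: "('v \<Rightarrow> 'v \<Rightarrow> bool) \<Rightarrow> 'v set \<Rightarrow> 'v set \<Rightarrow> 'v set" where
  "nbhd_in E K S = {w \<in> K. \<exists>s\<in>S. E s w}"

text \<open>The induced subgraph G[K] (G given by E) lies in the family F_k with respect to
  the partitions K = A \<union> B and A = A_0 \<union> ... \<union> A_(r-1) (pairs indexed by i < r),
  where |A| = a k, |B| = (1-a) k, r = a k / 2, |A_i| = 2.\<close>
definition in_Fk ::
  "('v \<Rightarrow> 'v \<Rightarrow> bool) \<Rightarrow> nat \<Rightarrow> real \<Rightarrow> nat \<Rightarrow> 'v set \<Rightarrow> 'v set \<Rightarrow> 'v set \<Rightarrow> (nat \<Rightarrow> 'v set) \<Rightarrow> bool"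
  where
  "in_Fk E k a r K A B Ai \<longleftrightarrow>
     finite K \<and> card K = k \<and>
     K = A \<union> B \<and> A \<inter> B = {} \<and>
     real (card A) = a * real k \<and> real (card B) = (1 - a) * real k \<and>
     2 * real r = a * real k \<and>
     (\<forall>i<r. card (Ai i) = 2) \<and>
     (\<forall>i<r. \<forall>j<r. i \<noteq> j \<longrightarrow> Ai i \<inter> Ai j = {}) \<and>
     (\<Union>i<r. Ai i) = A \<and>
     \<comment> \<open>(1) bipartite with parts A and B\<close>
     (\<forall>x\<in>A. \<forall>y\<in>A. \<not> E x y) \<and> (\<forall>x\<in>B. \<forall>y\<in>B. \<not> E x y) \<and>
     \<comment> \<open>(2) each vertex of B is adjacent to both or neither vertex of each A_i\<close>
     (\<forall>i<r. \<forall>\<beta>\<in>B. (\<forall>x\<in>Ai i. E \<beta> x) \<or> (\<forall>x\<in>Ai i. \<not> E \<beta> x)) \<and>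
     \<comment> \<open>(3) minimum degree in F of vertices of A\<close>
     (\<forall>v\<in>A. real (card (nbhd_in E K {v})) \<ge> 0.15 * real k) \<and>
     \<comment> \<open>(4) neighbourhoods of distinct pairs differ a lot\<close>
     (\<forall>i<r. \<forall>j<r. i \<noteq> j \<longrightarrow>
        real (card ((nbhd_in E K (Ai i) - nbhd_in E K (Ai j)) \<union>
                    (nbhd_in E K (Ai j) - nbhd_in E K (Ai i)))) \<ge> 0.25 * real k)"

end

theory Submission
  imports Defs
begin

text \<open>A vertex of \<open>A\<close> has at least \<open>0.15k\<close> neighbours in \<open>K\<close>, but if it lay in \<open>B'\<close> its
  neighbours inside \<open>K'\<close> would all lie in \<open>A'\<close>, leaving at most \<open>|A'| + |K - K'| \<le> 11ak\<close>
  of them. The two vertices of a pair \<open>A\<^sub>j\<close> are twins in \<open>F\<close>, so every vertex of \<open>K\<close>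
  sees both or neither; if they lay in different pairs of \<open>F'\<close>, the at least \<open>0.25k\<close>
  vertices distinguishing those pairs would all lie in \<open>K' - K\<close>, which has at most \<open>10ak\<close>
  elements.\<close>

lemma in_FkD:
  assumes "in_Fk E k a r K A B Ai"
  shows "finite K" and "card K = k" and "K = A \<union> B"
    and "real (card A) = a * real k" and "2 * real r = a * real k"
    and "\<And>i. i < r \<Longrightarrow> card (Ai i) = 2"
    and "(\<Union>i<r. Ai i) = A"
    and "\<And>x y. x \<in> A \<Longrightarrow> y \<in> A \<Longrightarrow> \<not> E x y"
    and "\<And>x y. x \<in> B \<Longrightarrow> y \<in> B \<Longrightarrow> \<not> E x y"
    and "\<And>i \<beta>. i < r \<Longrightarrow> \<beta> \<in> B \<Longrightarrow> (\<forall>x\<in>Ai i. E \<beta> x) \<or> (\<forall>x\<in>Ai i. \<not> E \<beta> x)"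
    and "\<And>v. v \<in> A \<Longrightarrow> real (card (nbhd_in E K {v})) \<ge> 0.15 * real k"
    and "\<And>i j. i < r \<Longrightarrow> j < r \<Longrightarrow> i \<noteq> j \<Longrightarrow>
        real (card ((nbhd_in E K (Ai i) - nbhd_in E K (Ai j)) \<union>
                    (nbhd_in E K (Ai j) - nbhd_in E K (Ai i)))) \<ge> 0.25 * real k"
  using assms unfolding in_Fk_def by auto

lemma card_Diff_le_of_card_Int:
  fixes K K' :: "'a set" and t :: real
  assumes "finite K'" and "real (card (K \<inter> K')) \<ge> real (card K') - t"
  shows "real (card (K' - K)) \<le> t"
  using card_Int_Diff[OF assms(1), of K] assms(2) by (simp add: Int_commute)

lemma Fk_nbhd_pair_eq_nbhd_vertex:
  assumes F: "in_Fk E k a r K A B Ai" and "simple_graph E" and i: "i < r" and x: "x \<in> Ai i"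
  shows "nbhd_in E K (Ai i) = nbhd_in E K {x}"
proof
  show "nbhd_in E K {x} \<subseteq> nbhd_in E K (Ai i)" using x unfolding nbhd_in_def by auto
next
  show "nbhd_in E K (Ai i) \<subseteq> nbhd_in E K {x}"
  proof
    fix y assume "y \<in> nbhd_in E K (Ai i)"
    then obtain s where y: "y \<in> K" and s: "s \<in> Ai i" and "E s y"
      unfolding nbhd_in_def by auto
    have "s \<in> A" using in_FkD(7)[OF F] s i by blast
    then have "y \<in> B" using in_FkD(3,8)[OF F] y \<open>E s y\<close> by blast
    moreover have "E y s" using \<open>simple_graph E\<close> \<open>E s y\<close> unfolding simple_graph_def by blast
    ultimately have "E y x" using in_FkD(10)[OF F i] s x by blast
    then have "E x y" using \<open>simple_graph E\<close> unfolding simple_graph_def by blast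
    then show "y \<in> nbhd_in E K {x}" using y unfolding nbhd_in_def by auto
  qed
qed

lemma Fk_nbhd_B_vertex_subset:
  assumes F': "in_Fk E k a r K' A' B' Ai'" and "v \<in> B'"
  shows "nbhd_in E K {v} \<subseteq> A' \<union> (K - K')"
  using in_FkD(3,9)[OF F'] assms(2) unfolding nbhd_in_def by blast

lemma nbhd_in_symdiff_subset_Diff:
  assumes "nbhd_in E K {u} = nbhd_in E K {v}"
  shows "(nbhd_in E K' {u} - nbhd_in E K' {v}) \<union> (nbhd_in E K' {v} - nbhd_in E K' {u})
           \<subseteq> K' - K"
  using assms unfolding nbhd_in_def set_eq_iff by auto

lemma Fk_A_vertex_in_A':
  assumes F: "in_Fk E k a r K A B Ai" and F': "in_Fk E k a r K' A' B' Ai'"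
    and "a < 0.01" and overlap: "real (card (K \<inter> K')) \<ge> (1 - 10 * a) * real k"
    and v: "v \<in> K \<inter> K'" "v \<in> A"
  shows "v \<in> A'"
proof (rule ccontr)
  assume "v \<notin> A'"
  then have "v \<in> B'" using in_FkD(3)[OF F'] v(1) by blast
  have "finite K" and "finite A'" using in_FkD(1,3)[OF F] in_FkD(1,3)[OF F'] by auto
  have "k > 0" using in_FkD(1,2)[OF F] v(1) by (metis IntD1 card_gt_0_iff empty_iff)
  have "0.15 * real k \<le> real (card (nbhd_in E K {v}))" using in_FkD(11)[OF F v(2)] .
  also have "\<dots> \<le> real (card (A' \<union> (K - K')))"
    using Fk_nbhd_B_vertex_subset[OF F' \<open>v \<in> B'\<close>, of K] \<open>finite K\<close> \<open>finite A'\<close>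
    by (simp add: card_mono)
  also have "\<dots> \<le> real (card A') + real (card (K - K'))"
    using card_Un_le[of A' "K - K'"] by linarith
  also have "\<dots> \<le> a * real k + 10 * a * real k"
    using in_FkD(4)[OF F'] card_Diff_le_of_card_Int[where K=K' and K'=K and t="10 * a * real k"]
      \<open>finite K\<close> overlap in_FkD(2)[OF F] by (simp add: Int_commute algebra_simps)
  finally show False using \<open>a < 0.01\<close> \<open>k > 0\<close> by simp
qed

lemma Fk_pair_is_pair':
  assumes F: "in_Fk E k a r K A B Ai" and F': "in_Fk E k a r K' A' B' Ai'"
    and "simple_graph E" and "a < 0.01"
    and overlap: "real (card (K \<inter> K')) \<ge> (1 - 10 * a) * real k"
    and u: "u \<in> A'" and v: "v \<in> A'" and j: "j < r" and uv: "{u, v} = Ai j"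
  shows "\<exists>j'<r. {u, v} = Ai' j'"
proof -
  have "card {u, v} = 2" using in_FkD(6)[OF F j] uv by simp
  obtain j1 where j1: "j1 < r" "u \<in> Ai' j1" using in_FkD(7)[OF F'] u by auto
  obtain j2 where j2: "j2 < r" "v \<in> Ai' j2" using in_FkD(7)[OF F'] v by auto
  show ?thesis
  proof (cases "j1 = j2")
    case True
    have "card (Ai' j1) = 2" using in_FkD(6)[OF F' j1(1)] .
    moreover from this have "finite (Ai' j1)" using card.infinite by fastforce
    moreover have "{u, v} \<subseteq> Ai' j1" using j1 j2 True by blast
    ultimately have "{u, v} = Ai' j1" using \<open>card {u, v} = 2\<close> by (metis card_subset_eq)
    then show ?thesis using j1 by blast
  next
    case False
    have "nbhd_in E K {u} = nbhd_in E K {v}"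
      using Fk_nbhd_pair_eq_nbhd_vertex[OF F \<open>simple_graph E\<close> j] uv by blast
    then have "(nbhd_in E K' (Ai' j1) - nbhd_in E K' (Ai' j2)) \<union>
                 (nbhd_in E K' (Ai' j2) - nbhd_in E K' (Ai' j1)) \<subseteq> K' - K"
      unfolding Fk_nbhd_pair_eq_nbhd_vertex[OF F' \<open>simple_graph E\<close> j1]
        Fk_nbhd_pair_eq_nbhd_vertex[OF F' \<open>simple_graph E\<close> j2]
      by (rule nbhd_in_symdiff_subset_Diff)
    then have "0.25 * real k \<le> real (card (K' - K))"
      using in_FkD(12)[OF F' j1(1) j2(1) False] card_mono[of "K' - K"] in_FkD(1)[OF F']
      by (meson finite_Diff of_nat_le_iff order_trans)
    also have "\<dots> \<le> 10 * a * real k"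
      using card_Diff_le_of_card_Int[where K=K and K'=K'] in_FkD(1,2)[OF F'] overlap
      by (simp add: algebra_simps)
    also have "\<dots> \<le> 0.1 * real k"
      using mult_right_mono[of a "0.01" "real k"] \<open>a < 0.01\<close> by simp
    finally have "k = 0" by simp
    then show ?thesis using in_FkD(5)[OF F] j by simp
  qed
qed

theorem mainTheorem14:
  fixes E :: "'v \<Rightarrow> 'v \<Rightarrow> bool" and a :: real and k r :: nat
    and K K' A B A' B' :: "'v set" and Ai Ai' :: "nat \<Rightarrow> 'v set"
  assumes "0 < a" and "a < 0.01"
    and "\<exists>m::nat. a * real k = 2 * real m"
    and "simple_graph E"
    and "finite K" and "finite K'" and "card K = k" and "card K' = k"
    and "real (card (K \<inter> K')) \<ge> (1 - 10 * a) * real k"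
    and "in_Fk E k a r K A B Ai"
    and "in_Fk E k a r K' A' B' Ai'"
  shows "(\<forall>v\<in>K \<inter> K'. v \<in> A \<longleftrightarrow> v \<in> A') \<and>
         (\<forall>u\<in>A \<inter> A'. \<forall>v\<in>A \<inter> A'.
            (\<exists>j<r. {u, v} = Ai j) \<longleftrightarrow> (\<exists>j'<r. {u, v} = Ai' j'))"
proof -
  have overlap': "real (card (K' \<inter> K)) \<ge> (1 - 10 * a) * real k"
    using assms(9) by (simp add: Int_commute)
  show ?thesis
  proof (intro conjI ballI iffI)
    fix v assume "v \<in> K \<inter> K'" "v \<in> A"
    then show "v \<in> A'" using Fk_A_vertex_in_A'[OF assms(10,11,2,9)] by blast
  next
    fix v assume "v \<in> K \<inter> K'" "v \<in> A'"
    then show "v \<in> A" using Fk_A_vertex_in_A'[OF assms(11,10,2) overlap'] by blast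
  next
    fix u v assume "u \<in> A \<inter> A'" "v \<in> A \<inter> A'" "\<exists>j<r. {u, v} = Ai j"
    then show "\<exists>j'<r. {u, v} = Ai' j'" using Fk_pair_is_pair'[OF assms(10,11,4,2,9)] by blast
  next
    fix u v assume "u \<in> A \<inter> A'" "v \<in> A \<inter> A'" "\<exists>j<r. {u, v} = Ai' j"
    then show "\<exists>j'<r. {u, v} = Ai j'" using Fk_pair_is_pair'[OF assms(11,10,4,2) overlap'] by blast
  qed
qed

end
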